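(* For any constant $C>0$, there exists no (possibly randomized) algorithm for the classical secretary problem with predictions (in the random order model) whose competitive ratio is better than $\max\{1-C\epsilon, 0.348\}$, where $\epsilon$ is the largest multiplicative prediction error of the instance. That is, there is no randomized algorithm such that for every instance $I$, its ratio $r(I)$ satisfies both $r(I) \ge 1 - C\epsilon(I)$ and $r(I) > 0.348$.
   Context: Classical secretary problem with predictions (random order model): there are $n$ candidates $N=\{1,\dots,n\}$, each with an actual value $v(i)>0$ and a predicted value $\hat v(i)\ge 0$; all predicted values (and $n$) are known to the algorithm in advance. The candidates arrive in an order drawn uniformly at random from all $n!$ permutations; upon arrival of a candidate the algorithm learns its index and actual value and must irrevocably decide whether to hire it; at most one candidate may be hired. The algorithm may use internal randomness. For an instance $I$, $\epsilon(I)=\max_{i\in N}|1-\hat v(i)/v(i)|$, and the ratio $r(I)$ of an algorithm is the expected value (over the random order and the algorithm's randomness) of the hired candidate (0 if none) divided by $\max_{i\in N} v(i)$. *)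

theory Defs
  imports Complex_Main "HOL-Combinatorics.Multiset_Permutations"
begin

text \<open>A (possibly randomized) online algorithm is given
  in behavioural form: A n vh h is the probability that the algorithm hires the
  most recently arrived candidate (the last entry of the history h), given that it has not
  hired anybody yet.  It knows n and all predictions vh in advance, and the history h is
  the list of (index, actual value) pairs of the candidates arrived so far, in arrival order.\<close>

type_synonym algorithm = "nat \<Rightarrow> (nat \<Rightarrow> real) \<Rightarrow> (nat \<times> real) list \<Rightarrow> real"

definition valid_algorithm :: "algorithm \<Rightarrow> bool" where
  "valid_algorithm A \<longleftrightarrow> (\<forall>n vh h. 0 \<le> A n vh h \<and> A n vh h \<le> 1)"

definition history :: "(nat \<Rightarrow> real) \<Rightarrow> nat list \<Rightarrow> nat \<Rightarrow> (nat \<times> real) list" where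
  "history v xs t = map (\<lambda>i. (i, v i)) (take (Suc t) xs)"

text \<open>Expected value of the hired candidate (0 if none) for a fixed arrival order xs.\<close>
definition value_of_order :: "algorithm \<Rightarrow> nat \<Rightarrow> (nat \<Rightarrow> real) \<Rightarrow> (nat \<Rightarrow> real) \<Rightarrow> nat list \<Rightarrow> real" where
  "value_of_order A n v vh xs =
     (\<Sum>t<n. v (xs ! t) * A n vh (history v xs t) * (\<Prod>s<t. 1 - A n vh (history v xs s)))"

definition expected_value :: "algorithm \<Rightarrow> nat \<Rightarrow> (nat \<Rightarrow> real) \<Rightarrow> (nat \<Rightarrow> real) \<Rightarrow> real" where
  "expected_value A n v vh =
     (\<Sum>xs\<in>permutations_of_set {0..<n}. value_of_order A n v vh xs) / real (fact n)"

definition ratio :: "algorithm \<Rightarrow> nat \<Rightarrow> (nat \<Rightarrow> real) \<Rightarrow> (nat \<Rightarrow> real) \<Rightarrow> real" where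
  "ratio A n v vh = expected_value A n v vh / Max (v ` {0..<n})"

definition pred_error :: "nat \<Rightarrow> (nat \<Rightarrow> real) \<Rightarrow> (nat \<Rightarrow> real) \<Rightarrow> real" where
  "pred_error n v vh = Max ((\<lambda>i. \<bar>1 - vh i / v i\<bar>) ` {0..<n})"

definition valid_instance :: "nat \<Rightarrow> (nat \<Rightarrow> real) \<Rightarrow> (nat \<Rightarrow> real) \<Rightarrow> bool" where
  "valid_instance n v vh \<longleftrightarrow> n \<ge> 1 \<and> (\<forall>i<n. v i > 0) \<and> (\<forall>i<n. vh i \<ge> 0)"

end

theory Submission
  imports Defs
begin

text \<open>Three candidates suffice. With predictions (1, 1/2, 1/2), a ratio of 1 at zero error
  forces the algorithm to hire candidate 0 whenever it arrives first. Now take actual values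
  (1, x, y) and (1, y, x) with y = 1000 x and the same predictions. When candidate 1 or 2 arrives
  first, the algorithm sees only its index and value, and its hiring probabilities at value x and
  at value y must nearly agree for some x = 1000^k, since they are bounded along this
  sequence. Conditioning on the first arrival, the two ratios then sum to at most about
  2/3 + 1/60 < 2 * 0.348.\<close>

lemma sum_stopping_probabilities:
  fixes a :: "nat \<Rightarrow> real"
  shows "(\<Sum>t<n. a t * (\<Prod>s<t. 1 - a s)) = 1 - (\<Prod>s<n. 1 - a s)"
  by (induction n) (simp_all add: algebra_simps)

lemma weighted_stopping_sum_le:
  fixes a w :: "nat \<Rightarrow> real"
  assumes a: "\<And>t. t < n \<Longrightarrow> 0 \<le> a t \<and> a t \<le> 1"
    and w: "\<And>t. t < n \<Longrightarrow> w t \<le> m" and "0 \<le> m"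
  shows "(\<Sum>t<n. w t * a t * (\<Prod>s<t. 1 - a s)) \<le> m"
proof -
  have stop_nonneg: "0 \<le> a t * (\<Prod>s<t. 1 - a s)" if "t < n" for t
    using a that by (auto intro!: mult_nonneg_nonneg prod_nonneg)
  have "(\<Sum>t<n. w t * a t * (\<Prod>s<t. 1 - a s)) \<le> (\<Sum>t<n. m * (a t * (\<Prod>s<t. 1 - a s)))"
    using w stop_nonneg by (intro sum_mono) (simp add: mult.assoc mult_right_mono)
  also have "\<dots> = m * (1 - (\<Prod>s<n. 1 - a s))"
    by (simp add: sum_distrib_left [symmetric] sum_stopping_probabilities)
  also have "\<dots> \<le> m"
  proof -
    have "0 \<le> (\<Prod>s<n. 1 - a s)"
      using a by (intro prod_nonneg) auto
    then show ?thesis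
      using \<open>0 \<le> m\<close> by (simp add: algebra_simps)
  qed
  finally show ?thesis .
qed

lemma weighted_stopping_sum_le_first:
  fixes a w :: "nat \<Rightarrow> real"
  assumes a: "\<And>t. t < Suc n \<Longrightarrow> 0 \<le> a t \<and> a t \<le> 1"
    and w: "\<And>t. 0 < t \<Longrightarrow> t < Suc n \<Longrightarrow> w t \<le> m" and "0 \<le> m"
  shows "(\<Sum>t<Suc n. w t * a t * (\<Prod>s<t. 1 - a s)) \<le> w 0 * a 0 + (1 - a 0) * m"
proof -
  have "(\<Sum>t<Suc n. w t * a t * (\<Prod>s<t. 1 - a s))
      = w 0 * a 0 + (1 - a 0) * (\<Sum>t<n. w (Suc t) * a (Suc t) * (\<Prod>s<t. 1 - a (Suc s)))"
    unfolding sum.lessThan_Suc_shift prod.lessThan_Suc_shift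
    by (simp add: sum_distrib_left algebra_simps)
  also have "\<dots> \<le> w 0 * a 0 + (1 - a 0) * m"
    using a[of 0] a w \<open>0 \<le> m\<close>
    by (intro add_left_mono mult_left_mono weighted_stopping_sum_le) auto
  finally show ?thesis .
qed

lemma sum_permutations_of_set_Cons:
  assumes "finite S" "S \<noteq> {}"
  shows "(\<Sum>xs\<in>permutations_of_set S. f xs) = (\<Sum>x\<in>S. \<Sum>ys\<in>permutations_of_set (S - {x}). f (x # ys))"
  using assms
  by (subst permutations_of_set_nonempty, simp, subst sum.UNION_disjoint)
     (auto simp: sum.reindex)

lemma value_of_order_le_first:
  assumes "valid_algorithm A" "0 < n" "0 \<le> m"
    and "\<And>t. 0 < t \<Longrightarrow> t < n \<Longrightarrow> v (xs ! t) \<le> m"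
  shows "value_of_order A n v vh xs
    \<le> v (xs ! 0) * A n vh (history v xs 0) + (1 - A n vh (history v xs 0)) * m"
proof -
  obtain n' where n: "n = Suc n'"
    using \<open>0 < n\<close> gr0_implies_Suc by blast
  show ?thesis
    unfolding value_of_order_def n
    using assms unfolding n valid_algorithm_def
    by (intro weighted_stopping_sum_le_first) auto
qed

lemma expected_value_le_first_arrival:
  assumes "valid_algorithm A" "0 < n"
    and "\<And>i j. i < n \<Longrightarrow> j < n \<Longrightarrow> j \<noteq> i \<Longrightarrow> v j \<le> m i"
    and "\<And>i. i < n \<Longrightarrow> 0 \<le> m i"
  shows "expected_value A n v vh
    \<le> (\<Sum>i<n. v i * A n vh [(i, v i)] + (1 - A n vh [(i, v i)]) * m i) / n"
proof -
  define B where "B i = v i * A n vh [(i, v i)] + (1 - A n vh [(i, v i)]) * m i" for i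
  have first: "value_of_order A n v vh (i # ys) \<le> B i"
    if "i < n" "ys \<in> permutations_of_set ({..<n} - {i})" for i ys
  proof -
    have ys: "set ys = {..<n} - {i}" "length ys = n - 1"
      using that by (simp_all add: permutations_of_setD length_finite_permutations_of_set)
    have later: "(i # ys) ! t \<in> {..<n} - {i}" if "0 < t" "t < n" for t
    proof -
      have "(i # ys) ! t = ys ! (t - 1)"
        using \<open>0 < t\<close> by (simp add: nth_Cons')
      also have "\<dots> \<in> set ys"
        using that ys(2) by (intro nth_mem) linarith
      finally show ?thesis
        using ys(1) by simp
    qed
    have "value_of_order A n v vh (i # ys) \<le> v ((i # ys) ! 0) * A n vh (history v (i # ys) 0)
        + (1 - A n vh (history v (i # ys) 0)) * m i"
    proof (rule value_of_order_le_first[OF \<open>valid_algorithm A\<close> \<open>0 < n\<close>])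
      show "0 \<le> m i"
        using assms(4) \<open>i < n\<close> .
      show "v ((i # ys) ! t) \<le> m i" if "0 < t" "t < n" for t
        using later[OF that] assms(3)[of i "(i # ys) ! t"] \<open>i < n\<close> by blast
    qed
    then show ?thesis
      by (simp add: B_def history_def)
  qed
  have "(\<Sum>xs\<in>permutations_of_set {..<n}. value_of_order A n v vh xs)
      = (\<Sum>i<n. \<Sum>ys\<in>permutations_of_set ({..<n} - {i}). value_of_order A n v vh (i # ys))"
    using \<open>0 < n\<close> by (intro sum_permutations_of_set_Cons) auto
  also have "\<dots> \<le> (\<Sum>i<n. \<Sum>ys\<in>permutations_of_set ({..<n} - {i}). B i)"
    using first by (intro sum_mono) auto
  also have "\<dots> = real (fact (n - 1)) * (\<Sum>i<n. B i)"
    by (simp add: sum_distrib_left)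
  finally have "(\<Sum>xs\<in>permutations_of_set {..<n}. value_of_order A n v vh xs) / real (fact n)
      \<le> real (fact (n - 1)) * (\<Sum>i<n. B i) / real (fact n)"
    by (simp add: divide_right_mono)
  also have "\<dots> = (\<Sum>i<n. B i) / n"
    using \<open>0 < n\<close> by (simp add: fact_reduce[of n])
  finally show ?thesis
    unfolding expected_value_def B_def atLeast0LessThan .
qed

lemma bounded_sequence_small_step:
  fixes f :: "nat \<Rightarrow> real"
  assumes "\<And>k. lo \<le> f k" "\<And>k. f k \<le> hi" "0 < e"
  shows "\<exists>k. f (Suc k) \<le> f k + e"
proof (rule ccontr)
  assume "\<nexists>k. f (Suc k) \<le> f k + e"
  then have step: "f k + e < f (Suc k)" for k
    by (simp add: not_le)
  have growth: "f 0 + real k * e \<le> f k" for k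
  proof (induction k)
    case (Suc k)
    then show ?case
      using step[of k] by (simp add: algebra_simps)
  qed simp
  obtain k where "hi - lo < real k * e"
    using ex_less_of_nat_mult[OF \<open>0 < e\<close>] by blast
  then show False
    using growth[of k] assms(1)[of 0] assms(2)[of k] by linarith
qed

definition hard_prediction :: "nat \<Rightarrow> real" where
  "hard_prediction i = (if i = 0 then 1 else 1/2)"

definition scaled_values :: "real \<Rightarrow> real \<Rightarrow> nat \<Rightarrow> real" where
  "scaled_values x y i = (if i = 0 then 1 else if i = 1 then x else y)"

lemma three_candidates: "{0..<3::nat} = {0, 1, 2}"
  by auto

lemma hard_prediction_exact:
  "valid_instance 3 hard_prediction hard_prediction"
  "pred_error 3 hard_prediction hard_prediction = 0"
  "ratio A 3 hard_prediction hard_prediction = expected_value A 3 hard_prediction hard_prediction"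
  by (simp_all add: valid_instance_def pred_error_def ratio_def three_candidates hard_prediction_def)

lemma scaled_values_instance:
  assumes "1 \<le> x" "1 \<le> y"
  shows "valid_instance 3 (scaled_values x y) hard_prediction"
    and "Max (scaled_values x y ` {0..<3}) = max x y"
  using assms
  by (auto simp: valid_instance_def hard_prediction_def scaled_values_def three_candidates max_def)

lemma hires_first_if_consistent:
  assumes "valid_algorithm A" "1 \<le> expected_value A 3 hard_prediction hard_prediction"
  shows "A 3 hard_prediction [(0, 1)] = 1"
proof -
  define p where "p i = A 3 hard_prediction [(i, hard_prediction i)]" for i
  have p: "0 \<le> p i" "p i \<le> 1" for i
    using assms(1) by (simp_all add: valid_algorithm_def p_def)
  have "expected_value A 3 hard_prediction hard_prediction
      \<le> (\<Sum>i<3. hard_prediction i * p i + (1 - p i) * (if i = 0 then 1/2 else 1)) / real 3"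
    unfolding p_def
    by (rule expected_value_le_first_arrival[OF assms(1)]) (auto simp: hard_prediction_def)
  also have "\<dots> = (5 + p 0 - p 1 - p 2) / 6"
    by (simp add: numeral_3_eq_3 numeral_2_eq_2 hard_prediction_def field_simps)
  finally have "6 \<le> 5 + p 0 - p 1 - p 2"
    using assms(2) by simp
  then have "1 \<le> p 0"
    using p[of 1] p[of 2] by linarith
  then show ?thesis
    using p[of 0] by (simp add: p_def hard_prediction_def)
qed

lemma scaled_values_pair_expected_value_le:
  assumes "valid_algorithm A" "A 3 hard_prediction [(0, 1)] = 1" "1 \<le> x" "x \<le> y"
  defines "q z \<equiv> A 3 hard_prediction [(1, z)] + A 3 hard_prediction [(2, z)]"
  shows "expected_value A 3 (scaled_values x y) hard_prediction
      + expected_value A 3 (scaled_values y x) hard_prediction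
    \<le> (2 + 4 * x + 2 * y + y * (q y - q x)) / 3"
proof -
  define p where "p i z = A 3 hard_prediction [(i, z)]" for i z
  have p: "0 \<le> p i z" "p i z \<le> 1" for i z
    using assms(1) by (simp_all add: valid_algorithm_def p_def)
  have "expected_value A 3 (scaled_values x y) hard_prediction
      \<le> (\<Sum>i<3. scaled_values x y i * p i (scaled_values x y i)
          + (1 - p i (scaled_values x y i)) * (if i = 2 then x else y)) / real 3"
    unfolding p_def using assms(3,4)
    by (intro expected_value_le_first_arrival[OF assms(1)]) (auto simp: scaled_values_def)
  also have "\<dots> = (1 + x * p 1 x + (1 - p 1 x) * y + y * p 2 y + (1 - p 2 y) * x) / 3"
    using assms(2) by (simp add: numeral_3_eq_3 numeral_2_eq_2 scaled_values_def p_def)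
  finally have first: "expected_value A 3 (scaled_values x y) hard_prediction
      \<le> (1 + x * p 1 x + (1 - p 1 x) * y + y * p 2 y + (1 - p 2 y) * x) / 3" .
  have "expected_value A 3 (scaled_values y x) hard_prediction
      \<le> (\<Sum>i<3. scaled_values y x i * p i (scaled_values y x i)
          + (1 - p i (scaled_values y x i)) * (if i = 1 then x else y)) / real 3"
    unfolding p_def using assms(3,4)
    by (intro expected_value_le_first_arrival[OF assms(1)]) (auto simp: scaled_values_def)
  also have "\<dots> = (1 + y * p 1 y + (1 - p 1 y) * x + x * p 2 x + (1 - p 2 x) * y) / 3"
    using assms(2) by (simp add: numeral_3_eq_3 numeral_2_eq_2 scaled_values_def p_def)
  finally have second: "expected_value A 3 (scaled_values y x) hard_prediction
      \<le> (1 + y * p 1 y + (1 - p 1 y) * x + x * p 2 x + (1 - p 2 x) * y) / 3" .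
  have "x * p 1 x \<le> x" "x * p 2 x \<le> x" "0 \<le> x * p 1 y" "0 \<le> x * p 2 y"
    using p assms(3) by (simp_all add: mult_left_le)
  with first second show ?thesis
    unfolding q_def p_def[symmetric] by (simp add: algebra_simps)
qed

lemma scaled_values_pair_ratio_lt:
  assumes "valid_algorithm A" "A 3 hard_prediction [(0, 1)] = 1" "1 \<le> x"
    and "A 3 hard_prediction [(1, 1000 * x)] + A 3 hard_prediction [(2, 1000 * x)]
      \<le> A 3 hard_prediction [(1, x)] + A 3 hard_prediction [(2, x)] + 1/20"
  shows "ratio A 3 (scaled_values x (1000 * x)) hard_prediction
    + ratio A 3 (scaled_values (1000 * x) x) hard_prediction < 0.696"
proof -
  define y where "y = 1000 * x"
  define q where "q z = A 3 hard_prediction [(1, z)] + A 3 hard_prediction [(2, z)]" for z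
  have "x \<le> y" "0 < y"
    using assms(3) by (simp_all add: y_def)
  have "expected_value A 3 (scaled_values x y) hard_prediction
      + expected_value A 3 (scaled_values y x) hard_prediction
    \<le> (2 + 4 * x + 2 * y + y * (q y - q x)) / 3"
    unfolding q_def using assms(1-3) \<open>x \<le> y\<close> by (rule scaled_values_pair_expected_value_le)
  also have "\<dots> \<le> (2 + 4 * x + 2 * y + y * (1/20)) / 3"
    using assms(4) \<open>0 < y\<close> by (simp add: q_def y_def mult_left_mono)
  also have "\<dots> < 0.696 * y"
    using assms(3) by (simp add: y_def)
  finally show ?thesis
    using assms(3) \<open>x \<le> y\<close> \<open>0 < y\<close>
    by (simp add: ratio_def scaled_values_instance(2) max_def add_divide_distrib [symmetric]
        divide_less_eq y_def [symmetric])
qed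

theorem theorem3:
  fixes C :: real
  assumes "C > 0"
  shows "\<not> (\<exists>A. valid_algorithm A \<and>
            (\<forall>n v vh. valid_instance n v vh \<longrightarrow>
               ratio A n v vh \<ge> 1 - C * pred_error n v vh \<and> ratio A n v vh > 0.348))"
proof
  assume "\<exists>A. valid_algorithm A \<and>
            (\<forall>n v vh. valid_instance n v vh \<longrightarrow>
               ratio A n v vh \<ge> 1 - C * pred_error n v vh \<and> ratio A n v vh > 0.348)"
  then obtain A where A: "valid_algorithm A" and good: "\<And>n v vh. valid_instance n v vh \<Longrightarrow>
      1 - C * pred_error n v vh \<le> ratio A n v vh \<and> 0.348 < ratio A n v vh"
    by blast
  \<comment> \<open>Consistency is only used at prediction error 0, so the value of C plays no role.\<close>
  have hires_first: "A 3 hard_prediction [(0, 1)] = 1"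
    using hires_first_if_consistent[OF A] good[OF hard_prediction_exact(1)] hard_prediction_exact(2,3)
    by simp
  define q where "q z = A 3 hard_prediction [(1, z)] + A 3 hard_prediction [(2, z)]" for z
  have "0 \<le> q z" "q z \<le> 2" for z
    using A unfolding valid_algorithm_def q_def by (smt (verit))+
  then obtain k :: nat where small_step: "q (1000 ^ Suc k) \<le> q (1000 ^ k) + 1/20"
    using bounded_sequence_small_step[of 0 "\<lambda>k. q (1000 ^ k)" 2 "1/20"] by auto
  define x :: real where "x = 1000 ^ k"
  have "1 \<le> x"
    by (simp add: x_def)
  have "ratio A 3 (scaled_values x (1000 * x)) hard_prediction
      + ratio A 3 (scaled_values (1000 * x) x) hard_prediction < 0.696"
    using hires_first small_step \<open>1 \<le> x\<close>
    unfolding q_def x_def by (intro scaled_values_pair_ratio_lt[OF A]) simp_all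
  moreover have "0.348 < ratio A 3 (scaled_values x (1000 * x)) hard_prediction"
    "0.348 < ratio A 3 (scaled_values (1000 * x) x) hard_prediction"
    using good scaled_values_instance(1) \<open>1 \<le> x\<close> by simp_all
  ultimately show False
    by simp
qed

end
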